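(* Let $n \ge 0$. Then, in $W$ and in every $W_{n+k}$ ($k\ge 0$): (i) every occurrence of $W_n$ other than the first one is immediately preceded by either $W_n$ or $W_n1$; (ii) every occurrence of $W_n$ other than the last one (in $W$: every occurrence) is immediately followed by either $W_n$ or $1W_n$; (iii) the word $W_nW_nW_nW_n$ does not occur.
   Context: Words are finite strings over $\{0,1\}$. Define $W_0 = 0$ and $W_{m+1} = W_m W_m 1 W_m$ for $m\ge 0$. Since each $W_m$ is an initial segment of $W_{m+1}$, there is a unique infinite word $W = W(0)W(1)W(2)\cdots$ (indexed from position $0$) such that every $W_m$ is an initial segment of $W$. An occurrence of a word $u$ in $v$ is a position where $u$ appears as a contiguous block of $v$. *)

theory Defs
  imports Main
begin

text \<open>Words over {0,1} are represented as lists of naturals with entries 0 and 1.\<close>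

fun Wm :: "nat \<Rightarrow> nat list" where
  "Wm 0 = [0]"
| "Wm (Suc m) = Wm m @ Wm m @ [1] @ Wm m"

definition Winf :: "nat \<Rightarrow> nat" where
  "Winf = (THE w. \<forall>m i. i < length (Wm m) \<longrightarrow> w i = Wm m ! i)"

definition occ :: "nat list \<Rightarrow> nat list \<Rightarrow> nat \<Rightarrow> bool" where
  "occ u v p \<longleftrightarrow> p + length u \<le> length v \<and> take (length u) (drop p v) = u"

definition occ_inf :: "nat list \<Rightarrow> (nat \<Rightarrow> nat) \<Rightarrow> nat \<Rightarrow> bool" where
  "occ_inf u w p \<longleftrightarrow> (\<forall>j < length u. w (p + j) = u ! j)"

end

theory Submission
  imports Defs "HOL-Library.Sublist"
begin

text \<open>Let \<open>\<sigma>\<^sub>n\<close> be the morphism \<open>0 \<mapsto> W\<^sub>n, 1 \<mapsto> 1\<close> (here \<open>subst n\<close>). Then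
  \<open>W\<^sub>n\<^sub>+\<^sub>k = \<sigma>\<^sub>n(W\<^sub>k)\<close> and \<open>\<sigma>\<^sub>n\<^sub>+\<^sub>1 = \<sigma>\<^sub>n \<circ> \<sigma>\<^sub>1\<close>. The morphism \<open>\<sigma>\<^sub>n\<close> is recognizable: every
  occurrence of \<open>W\<^sub>n\<close> in \<open>\<sigma>\<^sub>n(v)\<close> starts at the image of a letter 0 of \<open>v\<close>, by induction on
  \<open>n\<close>, the case \<open>n = 1\<close> being a direct inspection of the occurrences of 0010 in \<open>\<sigma>\<^sub>1(v)\<close>.
  So the occurrences of \<open>W\<^sub>n\<close> in \<open>W\<^sub>n\<^sub>+\<^sub>k\<close> are the images of the letters 0 of \<open>W\<^sub>k\<close>, and the
  three claims follow from the facts that \<open>W\<^sub>k\<close> begins and ends with 0 and contains neither 11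
  nor 0000. Statements about \<open>W\<close> are read off a long enough prefix \<open>W\<^sub>m\<close>.\<close>

lemma Wm_not_Nil: "Wm n \<noteq> []"
  by (cases n) auto

lemma Wm_nth_0: "Wm n ! 0 = 0"
  by (induction n) (auto simp: nth_append Wm_not_Nil)

lemma Wm_last: "last (Wm n) = 0"
  by (induction n) (auto simp: Wm_not_Nil)

lemma Wm_1 [simp]: "Wm 1 = [0, 0, 1, 0]"
  by (simp add: numeral_eq_Suc)

lemma set_Wm: "set (Wm n) \<subseteq> {0, 1}"
  by (induction n) auto

lemma length_Wm_ge: "Suc n \<le> length (Wm n)"
  by (induction n) auto

lemma occ_iff_nth: "occ u w p \<longleftrightarrow> p + length u \<le> length w \<and> (\<forall>j<length u. w ! (p + j) = u ! j)"
proof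
  assume "occ u w p"
  then show "p + length u \<le> length w \<and> (\<forall>j<length u. w ! (p + j) = u ! j)"
    unfolding occ_def by (metis nth_drop nth_take add_leD1)
next
  assume "p + length u \<le> length w \<and> (\<forall>j<length u. w ! (p + j) = u ! j)"
  then show "occ u w p"
    unfolding occ_def by (auto intro!: nth_equalityI)
qed

lemma occ_appendD:
  assumes "occ (u1 @ u2) w p"
  shows "occ u1 w p" and "occ u2 w (p + length u1)"
proof -
  have len: "p + length u1 + length u2 \<le> length w"
    and at: "\<And>j. j < length u1 + length u2 \<Longrightarrow> w ! (p + j) = (u1 @ u2) ! j"
    using assms by (auto simp: occ_iff_nth)
  show "occ u1 w p"
    unfolding occ_iff_nth using len at by (auto simp: nth_append)
  show "occ u2 w (p + length u1)"
    unfolding occ_iff_nth using len at[of "length u1 + _"] by (auto simp: add.assoc)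
qed

lemma occ_append_right: "occ u xs p \<Longrightarrow> occ u (xs @ ys) p"
  by (auto simp: occ_def)

lemma occ_append_left: "occ u ys p \<Longrightarrow> occ u (xs @ ys) (length xs + p)"
  by (auto simp: occ_def)

lemma occ_append_left_iff: "length xs \<le> p \<Longrightarrow> occ u (xs @ ys) p \<longleftrightarrow> occ u ys (p - length xs)"
  by (auto simp: occ_def)

lemma occ_decomp: "occ u w p \<Longrightarrow> w = take p w @ u @ drop (length u) (drop p w)"
  unfolding occ_def by (metis append_take_drop_id)

lemma occ_imp_sublist: "occ u w p \<Longrightarrow> sublist u w"
  by (metis occ_decomp sublist_appendI)

definition subst :: "nat \<Rightarrow> nat list \<Rightarrow> nat list" where
  "subst n v = concat (map (\<lambda>c. if c = 0 then Wm n else [1]) v)"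

definition subst_pos :: "nat \<Rightarrow> nat list \<Rightarrow> nat \<Rightarrow> nat" where
  "subst_pos n v i = length (subst n (take i v))"

lemma subst_Nil [simp]: "subst n [] = []"
  and subst_Cons [simp]: "subst n (c # v) = (if c = 0 then Wm n else [1]) @ subst n v"
  and subst_append [simp]: "subst n (v @ v') = subst n v @ subst n v'"
  by (auto simp: subst_def)

lemma set_subst: "set (subst n v) \<subseteq> {0, 1}"
  using set_Wm by (induction v) auto

lemma subst_0: "subst 0 v = map (\<lambda>c. if c = 0 then 0 else 1) v"
  by (induction v) auto

lemma Wm_add: "Wm (n + k) = subst n (Wm k)"
  by (induction k) auto

lemma subst_Suc: "subst (Suc n) v = subst n (subst 1 v)"
  by (induction v) auto

lemma subst_pos_0 [simp]: "subst_pos n v 0 = 0"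
  by (simp add: subst_pos_def)

lemma subst_pos_Suc:
  "i < length v \<Longrightarrow> subst_pos n v (Suc i) = subst_pos n v i + (if v ! i = 0 then length (Wm n) else 1)"
  by (simp add: subst_pos_def take_Suc_conv_app_nth)

lemma subst_pos_less: "i < j \<Longrightarrow> j \<le> length v \<Longrightarrow> subst_pos n v i < subst_pos n v j"
proof (induction j)
  case (Suc j)
  then have "subst_pos n v i \<le> subst_pos n v j"
    by (cases "i = j") auto
  then show ?case
    using Suc.prems subst_pos_Suc[of j v n] length_Wm_ge[of n] by simp
qed simp

lemma subst_pos_less_iff:
  "i \<le> length v \<Longrightarrow> j \<le> length v \<Longrightarrow> subst_pos n v i < subst_pos n v j \<longleftrightarrow> i < j"
  by (metis subst_pos_less less_asym linorder_neqE_nat)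

lemma subst_pos_inject:
  "i \<le> length v \<Longrightarrow> j \<le> length v \<Longrightarrow> subst_pos n v i = subst_pos n v j \<longleftrightarrow> i = j"
  by (metis subst_pos_less less_irrefl linorder_neqE_nat)

lemma subst_pos_Suc_level: "subst_pos (Suc n) v i = subst_pos n (subst 1 v) (subst_pos 1 v i)"
proof -
  have "subst 1 v = subst 1 (take i v) @ subst 1 (drop i v)"
    by (metis append_take_drop_id subst_append)
  then have "take (subst_pos 1 v i) (subst 1 v) = subst 1 (take i v)"
    unfolding subst_pos_def by simp
  then show ?thesis
    unfolding subst_pos_def subst_Suc[of n] by simp
qed

lemma nth_subst_pos: "i < length v \<Longrightarrow> subst n v ! subst_pos n v i = (if v ! i = 0 then 0 else 1)"
proof -
  assume "i < length v"
  then have "subst n v = subst n (take i v) @ subst n (v ! i # drop (Suc i) v)"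
    by (metis Cons_nth_drop_Suc append_take_drop_id subst_append)
  then show ?thesis
    by (simp add: subst_pos_def nth_append Wm_nth_0 Wm_not_Nil)
qed

lemma occ_subst: "occ u v s \<Longrightarrow> occ (subst n u) (subst n v) (subst_pos n v s)"
proof -
  assume "occ u v s"
  then have "subst n v = subst n (take s v) @ subst n u @ subst n (drop (length u) (drop s v))"
    by (metis occ_decomp subst_append)
  then show ?thesis
    by (simp add: occ_def subst_pos_def)
qed

lemma subst_pos_0_eq: "subst_pos 0 v i = min i (length v)"
  by (simp add: subst_pos_def subst_0)

lemma subst_pos_eq_Suc:
  assumes "i < length v" and "j \<le> length v"
    and "subst_pos n v j = subst_pos n v i + (if v ! i = 0 then length (Wm n) else 1)"
  shows "j = Suc i"
  using assms subst_pos_Suc[of i v n] subst_pos_inject[of j v "Suc i" n] by simp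

lemma subst_Cons_split: "subst n (c # v) = subst n [c] @ subst n v"
  by (metis append_Cons append_Nil subst_append)

lemma occ_Wm_1_subst_1:
  "occ [0, 0, 1, 0] (subst 1 v) p \<Longrightarrow> \<exists>t<length v. v ! t = 0 \<and> p = subst_pos 1 v t"
proof (induction v arbitrary: p)
  case Nil
  then show ?case by (simp add: occ_def)
next
  case (Cons c v)
  let ?h = "subst 1 [c]"
  have in_tail: ?case if "length ?h \<le> p"
  proof -
    have "occ [0, 0, 1, 0] (subst 1 v) (p - length ?h)"
      using Cons.prems that occ_append_left_iff[of ?h p] subst_Cons_split[of 1 c v] by simp
    then obtain t where "t < length v" "v ! t = 0" "p - length ?h = subst_pos 1 v t"
      using Cons.IH by blast
    moreover have "subst_pos 1 (c # v) (Suc t) = length ?h + subst_pos 1 v t"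
      using subst_Cons_split[of 1 c] by (simp add: subst_pos_def)
    ultimately show ?thesis
      using that by (intro exI[of _ "Suc t"]) auto
  qed
  show ?case
  proof (cases "c = 0")
    case True
    then have h: "?h = [0, 0, 1, 0]" by simp
    consider "p = 0" | "p = 1" | "p = 2" | "p = 3" | "4 \<le> p" by linarith
    then show ?thesis
    proof cases
      case 4
      then have "take 3 (subst 1 v) = [0, 1, 0]"
        using Cons.prems True by (simp add: occ_def numeral_3_eq_3)
      then show ?thesis
        by (cases v) (auto split: if_splits)
    qed (use Cons.prems True h in_tail in \<open>auto simp: occ_def\<close>)
  next
    case False
    then show ?thesis
      using Cons.prems in_tail by (cases p) (auto simp: occ_def)
  qed
qed

text \<open>Inductive step of recognizability: an occurrence of \<open>W\<^sub>n\<^sub>+\<^sub>1 = W\<^sub>n W\<^sub>n 1 W\<^sub>n\<close> whose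
  copies of \<open>W\<^sub>n\<close> are aligned covers the images of four consecutive letters 0010.\<close>

lemma occ_Wm_Suc_subst_aligned:
  assumes aligned: "\<And>q. occ (Wm n) (subst n w) q \<Longrightarrow> \<exists>t<length w. w ! t = 0 \<and> q = subst_pos n w t"
    and binary: "set w \<subseteq> {0, 1}"
    and occ: "occ (Wm (Suc n)) (subst n w) p"
  shows "\<exists>i. occ [0, 0, 1, 0] w i \<and> p = subst_pos n w i"
proof -
  define L where "L = length (Wm n)"
  have "occ (Wm n @ Wm n @ [1] @ Wm n) (subst n w) p"
    using occ by simp
  note split = occ_appendD[OF this] occ_appendD[OF occ_appendD(2)[OF this]]
    occ_appendD[OF occ_appendD(2)[OF occ_appendD(2)[OF this]]]
  then have o1: "occ (Wm n) (subst n w) p" and o2: "occ (Wm n) (subst n w) (p + L)"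
    and o3: "occ [1] (subst n w) (p + L + L)" and o4: "occ (Wm n) (subst n w) (p + L + L + 1)"
    unfolding L_def by simp_all
  obtain i where i: "i < length w" "w ! i = 0" "p = subst_pos n w i"
    using aligned[OF o1] by blast
  obtain j where j: "j < length w" "w ! j = 0" "subst_pos n w j = p + L"
    using aligned[OF o2] by metis
  obtain l where l: "l < length w" "w ! l = 0" "subst_pos n w l = p + L + L + 1"
    using aligned[OF o4] by metis
  have ji: "j = Suc i"
    using subst_pos_eq_Suc[of i w j n] i j unfolding L_def by simp
  have pos2: "subst_pos n w (Suc (Suc i)) = p + L + L"
    using subst_pos_Suc[of "Suc i" w n] subst_pos_Suc[of i w n] i j ji unfolding L_def by simp
  have "Suc (Suc i) < l"
    using subst_pos_less_iff[of "Suc (Suc i)" w l n] pos2 l j ji by simp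
  with l have i2: "Suc (Suc i) < length w" by simp
  have "subst n w ! (p + L + L) = 1"
    using o3 by (simp add: occ_iff_nth)
  then have "w ! Suc (Suc i) \<noteq> 0"
    using nth_subst_pos[OF i2, of n] pos2 by (auto split: if_splits)
  then have w2: "w ! Suc (Suc i) = 1"
    using binary nth_mem[OF i2] by auto
  have "l = Suc (Suc (Suc i))"
    using subst_pos_eq_Suc[of "Suc (Suc i)" w l n] i2 pos2 w2 l by simp
  then have "occ [0, 0, 1, 0] w i"
    using i j ji w2 l by (auto simp: occ_iff_nth less_Suc_eq numeral_eq_Suc)
  with i show ?thesis by blast
qed

lemma occ_Wm_subst:
  "occ (Wm n) (subst n v) p \<Longrightarrow> \<exists>t<length v. v ! t = 0 \<and> p = subst_pos n v t"
proof (induction n arbitrary: v p)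
  case 0
  then show ?case
    by (auto simp: occ_iff_nth subst_0 subst_pos_0_eq split: if_splits intro!: exI[of _ p])
next
  case (Suc n)
  have "occ (Wm (Suc n)) (subst n (subst 1 v)) p"
    using Suc.prems unfolding subst_Suc[of n v] .
  then obtain i where "occ [0, 0, 1, 0] (subst 1 v) i" and p: "p = subst_pos n (subst 1 v) i"
    using occ_Wm_Suc_subst_aligned[where w = "subst 1 v", OF Suc.IH set_subst] by blast
  then obtain t where "t < length v" "v ! t = 0" "i = subst_pos 1 v t"
    using occ_Wm_1_subst_1 by blast
  then show ?case
    using p subst_pos_Suc_level[of n v t] by auto
qed

lemma not_sublist_appendI:
  assumes "\<not> sublist u x" and "\<not> sublist u y" and "length u \<le> Suc m"
    and "\<not> sublist u (drop (length x - m) x @ take m y)"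
  shows "\<not> sublist u (x @ y)"
proof
  assume "sublist u (x @ y)"
  with assms(1,2) obtain u1 u2 where u: "u = u1 @ u2" "suffix u1 x" "prefix u2 y" "u1 \<noteq> []" "u2 \<noteq> []"
    by (auto simp: sublist_append) (metis append_Nil append_Nil2 prefix_imp_sublist suffix_imp_sublist)
  then obtain x0 y0 where x: "x = x0 @ u1" and y: "y = u2 @ y0"
    by (auto simp: suffix_def prefix_def)
  have "length u1 \<le> m" and "length u2 \<le> m"
    using u assms(3) by (auto simp: length_greater_0_conv[symmetric] simp del: length_greater_0_conv)
  then have "drop (length x - m) x = drop (length x0 + length u1 - m) x0 @ u1"
    and "take m y = u2 @ take (m - length u2) y0"
    unfolding x y by simp_all
  then have "sublist u (drop (length x - m) x @ take m y)"
    using u(1) by (metis append_assoc sublist_appendI)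
  with assms(4) show False ..
qed

lemma Wm_Suc_shape:
  "prefix [0, 0, 1] (Wm (Suc k)) \<and> suffix [0, 1, 0] (Wm (Suc k)) \<and>
   \<not> sublist [1, 1] (Wm (Suc k)) \<and> \<not> sublist [0, 0, 0, 0] (Wm (Suc k))"
proof (induction k)
  case 0
  then show ?case by (simp add: sublist_code suffix_to_prefix)
next
  case (Suc k)
  define a where "a = Wm (Suc k)"
  have pre: "prefix [0, 0, 1] a" and suf: "suffix [0, 1, 0] a"
    using Suc unfolding a_def by simp_all
  then obtain b c where b: "a = [0, 0, 1] @ b" and c: "a = c @ [0, 1, 0]"
    unfolding prefix_def suffix_def by blast
  have len: "3 \<le> length a"
    using b by simp
  have drop3: "drop (length a - 3) a = [0, 1, 0]"
    using c by simp
  have take3: "take 3 a = [0, 0, 1]" and take2: "take 2 a = [0, 0]"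
    using b by simp_all
  \<comment> \<open>the seams of \<open>a a 1 a\<close> lie in 1001, 010100 and 010001\<close>
  have free: "\<not> sublist u (a @ a @ [1] @ a)" if u: "u \<in> {[1, 1], [0, 0, 0, 0]}" "\<not> sublist u a" for u
  proof -
    have "\<not> sublist u ([1] @ a)"
      using not_sublist_appendI[of u "[1]" a 3] u take3 by (auto simp: sublist_code)
    then have "\<not> sublist u (a @ [1] @ a)"
      using not_sublist_appendI[of u a "[1] @ a" 3] u drop3 take2 by (auto simp: sublist_code)
    then show ?thesis
      using not_sublist_appendI[of u a "a @ [1] @ a" 3] u drop3 take3 len by (auto simp: sublist_code)
  qed
  have "Wm (Suc (Suc k)) = a @ a @ [1] @ a"
    by (simp add: a_def)
  then show ?case
    using free Suc[folded a_def] pre suffix_appendI[OF suf, of "a @ a @ [1]"] by simp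
qed

lemma occ_Wm_subst_pos: "t < length v \<Longrightarrow> v ! t = 0 \<Longrightarrow> occ (Wm n) (subst n v) (subst_pos n v t)"
  using occ_subst[of "[0]" v t n] by (simp add: occ_iff_nth)

lemma Wm_no_11: "\<not> sublist [1, 1] (Wm k)"
  using Wm_Suc_shape by (cases k) (auto simp: sublist_code)

lemma Wm_no_0000: "\<not> sublist [0, 0, 0, 0] (Wm k)"
  using Wm_Suc_shape by (cases k) (auto simp: sublist_code)

lemma nth_Wm_eq_1: "i < length (Wm k) \<Longrightarrow> Wm k ! i \<noteq> 0 \<Longrightarrow> Wm k ! i = 1"
  using set_Wm[of k] nth_mem by fastforce

lemma nth_Wm_no_11: "Suc i < length (Wm k) \<Longrightarrow> Wm k ! i = 0 \<or> Wm k ! Suc i = 0"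
proof (rule ccontr)
  assume "Suc i < length (Wm k)" and "\<not> (Wm k ! i = 0 \<or> Wm k ! Suc i = 0)"
  then have "occ [1, 1] (Wm k) i"
    using nth_Wm_eq_1[of i k] nth_Wm_eq_1[of "Suc i" k] by (auto simp: occ_iff_nth less_Suc_eq)
  then show False
    using Wm_no_11 occ_imp_sublist by blast
qed

lemma occ_Wm_preceded:
  assumes p: "occ (Wm n) (Wm (n + k)) p" and q: "occ (Wm n) (Wm (n + k)) q" and "q < p"
  shows "(length (Wm n) \<le> p \<and> occ (Wm n) (Wm (n + k)) (p - length (Wm n)))
       \<or> (length (Wm n) + 1 \<le> p \<and> occ (Wm n @ [1]) (Wm (n + k)) (p - length (Wm n) - 1))"
proof -
  define v where "v = Wm k"
  have W: "Wm (n + k) = subst n v"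
    unfolding v_def by (rule Wm_add)
  obtain t where t: "t < length v" "v ! t = 0" "p = subst_pos n v t"
    using occ_Wm_subst p W by metis
  obtain s where s: "s < length v" "q = subst_pos n v s"
    using occ_Wm_subst q W by metis
  have "s < t"
    using subst_pos_less_iff[of s v t n] s t \<open>q < p\<close> by simp
  then obtain t1 where t1: "t = Suc t1"
    using less_imp_Suc_add by blast
  show ?thesis
  proof (cases "v ! t1 = 0")
    case True
    then have "p = subst_pos n v t1 + length (Wm n)"
      using subst_pos_Suc[of t1 v n] t t1 by simp
    then show ?thesis
      using occ_Wm_subst_pos[of t1 v n] True t t1 W by simp
  next
    case False
    then obtain t2 where t2: "t1 = Suc t2"
      using Wm_nth_0[of k] unfolding v_def by (cases t1) auto
    have v2: "v ! t2 = 0" and v1: "v ! t1 = 1"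
      using nth_Wm_no_11[of t2 k] nth_Wm_eq_1[of t1 k] False t t1 t2 unfolding v_def by auto
    have "p = subst_pos n v t2 + length (Wm n) + 1"
      using subst_pos_Suc[of t1 v n] subst_pos_Suc[of t2 v n] t t1 t2 v1 v2 by simp
    moreover have "occ (subst n [0, 1]) (subst n v) (subst_pos n v t2)"
      using t t1 t2 v1 v2 by (intro occ_subst) (auto simp: occ_iff_nth less_Suc_eq)
    ultimately show ?thesis
      using W by simp
  qed
qed

lemma occ_Wm_followed:
  assumes p: "occ (Wm n) (Wm (n + k)) p" and q: "occ (Wm n) (Wm (n + k)) q" and "p < q"
  shows "occ (Wm n) (Wm (n + k)) (p + length (Wm n)) \<or> occ ([1] @ Wm n) (Wm (n + k)) (p + length (Wm n))"
proof -
  define v where "v = Wm k"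
  have W: "Wm (n + k) = subst n v"
    unfolding v_def by (rule Wm_add)
  obtain t where t: "t < length v" "v ! t = 0" "p = subst_pos n v t"
    using occ_Wm_subst p W by metis
  obtain s where s: "s < length v" "q = subst_pos n v s"
    using occ_Wm_subst q W by metis
  have "t < s"
    using subst_pos_less_iff[of t v s n] s t \<open>p < q\<close> by simp
  with s have t1: "Suc t < length v"
    by simp
  have pos1: "subst_pos n v (Suc t) = p + length (Wm n)"
    using subst_pos_Suc[of t v n] t by simp
  show ?thesis
  proof (cases "v ! Suc t = 0")
    case True
    then show ?thesis
      using occ_Wm_subst_pos[of "Suc t" v n] t1 pos1 W by simp
  next
    case False
    then have "Suc t \<noteq> length v - 1"
      using Wm_last[of k] Wm_not_Nil[of k] unfolding v_def by (auto simp: last_conv_nth)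
    with t1 have t2: "Suc (Suc t) < length v"
      by simp
    have v1: "v ! Suc t = 1" and v2: "v ! Suc (Suc t) = 0"
      using nth_Wm_eq_1[of "Suc t" k] nth_Wm_no_11[of "Suc t" k] False t1 t2 unfolding v_def by auto
    have "occ (subst n [1, 0]) (subst n v) (subst_pos n v (Suc t))"
      using t2 v1 v2 by (intro occ_subst) (auto simp: occ_iff_nth less_Suc_eq)
    then show ?thesis
      using W pos1 by simp
  qed
qed

lemma not_occ_Wm_fourth_power: "\<not> occ (Wm n @ Wm n @ Wm n @ Wm n) (Wm (n + k)) p"
proof
  define v where "v = Wm k"
  define L where "L = length (Wm n)"
  assume "occ (Wm n @ Wm n @ Wm n @ Wm n) (Wm (n + k)) p"
  then have "occ (Wm n @ Wm n @ Wm n @ Wm n) (subst n v) p"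
    unfolding v_def Wm_add .
  note split = occ_appendD[OF this] occ_appendD[OF occ_appendD(2)[OF this]]
    occ_appendD[OF occ_appendD(2)[OF occ_appendD(2)[OF this]]]
  obtain t0 where t0: "t0 < length v" "v ! t0 = 0" "subst_pos n v t0 = p"
    using occ_Wm_subst[OF split(1)] by metis
  obtain t1 where t1: "t1 < length v" "v ! t1 = 0" "subst_pos n v t1 = p + L"
    using occ_Wm_subst[OF split(3)] unfolding L_def by metis
  obtain t2 where t2: "t2 < length v" "v ! t2 = 0" "subst_pos n v t2 = p + L + L"
    using occ_Wm_subst[OF split(5)] unfolding L_def by metis
  obtain t3 where t3: "t3 < length v" "v ! t3 = 0" "subst_pos n v t3 = p + L + L + L"
    using occ_Wm_subst[OF split(6)] unfolding L_def by metis
  have "t1 = Suc t0" "t2 = Suc t1" "t3 = Suc t2"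
    using subst_pos_eq_Suc[of t0 v t1 n] subst_pos_eq_Suc[of t1 v t2 n] subst_pos_eq_Suc[of t2 v t3 n]
      t0 t1 t2 t3 unfolding L_def by simp_all
  then have "occ [0, 0, 0, 0] v t0"
    using t0 t1 t2 t3 by (auto simp: occ_iff_nth less_Suc_eq numeral_eq_Suc)
  then show False
    using Wm_no_0000 occ_imp_sublist unfolding v_def by blast
qed

lemma prefix_Wm_mono: "m \<le> m' \<Longrightarrow> prefix (Wm m) (Wm m')"
proof (induction m' rule: dec_induct)
  case (step m')
  then show ?case
    by (simp add: prefix_order.trans[OF step.IH])
qed simp

lemma Winf_nth:
  assumes "i < length (Wm m)"
  shows "Winf i = Wm m ! i"
proof -
  have agree: "Wm j ! j = Wm m' ! j" if "j < length (Wm m')" for m' j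
  proof (cases "m' \<le> j")
    case True
    then show ?thesis
      using prefix_Wm_mono that by (metis nth_append prefix_def)
  next
    case False
    then show ?thesis
      using prefix_Wm_mono length_Wm_ge[of j] by (metis Suc_le_lessD nat_le_linear nth_append prefix_def)
  qed
  have "Winf = (\<lambda>j. Wm j ! j)"
    unfolding Winf_def
  proof (rule the_equality)
    fix w assume "\<forall>m i. i < length (Wm m) \<longrightarrow> w i = Wm m ! i"
    then show "w = (\<lambda>j. Wm j ! j)"
      using length_Wm_ge by (auto simp: Suc_le_eq)
  qed (use agree in auto)
  then show ?thesis
    using agree[OF assms] by metis
qed

lemma occ_inf_Winf_iff:
  assumes "p + length u \<le> length (Wm m)"
  shows "occ_inf u Winf p \<longleftrightarrow> occ u (Wm m) p"
proof -
  have "Winf (p + j) = Wm m ! (p + j)" if "j < length u" for j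
    using assms that by (intro Winf_nth) simp
  then show ?thesis
    using assms by (auto simp: occ_inf_def occ_iff_nth)
qed

lemma occ_Wm_imp_occ_inf: "occ u (Wm m) p \<Longrightarrow> occ_inf u Winf p"
  using occ_inf_Winf_iff by (auto simp: occ_def)

lemma occ_inf_imp_occ_Wm: "occ_inf u Winf p \<Longrightarrow> p + length u \<le> m \<Longrightarrow> occ u (Wm m) p"
  using occ_inf_Winf_iff[of p u m] length_Wm_ge[of m] by simp

lemma Winf_occ_Wm_preceded:
  assumes "occ_inf (Wm n) Winf p" and "occ_inf (Wm n) Winf q" and "q < p"
  shows "(length (Wm n) \<le> p \<and> occ_inf (Wm n) Winf (p - length (Wm n)))
       \<or> (length (Wm n) + 1 \<le> p \<and> occ_inf (Wm n @ [1]) Winf (p - length (Wm n) - 1))"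
proof -
  let ?k = "p + length (Wm n)"
  have "occ (Wm n) (Wm (n + ?k)) p" and "occ (Wm n) (Wm (n + ?k)) q"
    using assms occ_inf_imp_occ_Wm by simp_all
  then show ?thesis
    using occ_Wm_preceded[of n ?k p q] \<open>q < p\<close> occ_Wm_imp_occ_inf by blast
qed

lemma Winf_occ_Wm_followed:
  assumes "occ_inf (Wm n) Winf p"
  shows "occ_inf (Wm n) Winf (p + length (Wm n)) \<or> occ_inf ([1] @ Wm n) Winf (p + length (Wm n))"
proof -
  let ?k = "p + length (Wm n)"
  have "occ (Wm n) (Wm (n + ?k)) p"
    using assms occ_inf_imp_occ_Wm by simp
  moreover have "Wm (n + Suc ?k) = Wm (n + ?k) @ (Wm (n + ?k) @ [1] @ Wm (n + ?k))"
    by simp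
  ultimately have "occ (Wm n) (Wm (n + Suc ?k)) p"
    and "occ (Wm n) (Wm (n + Suc ?k)) (length (Wm (n + ?k)) + p)"
    by (metis occ_append_right occ_append_left)+
  moreover have "p < length (Wm (n + ?k)) + p"
    using Wm_not_Nil[of "n + ?k"] by simp
  ultimately show ?thesis
    using occ_Wm_followed occ_Wm_imp_occ_inf by blast
qed

lemma Winf_not_occ_Wm_fourth_power: "\<not> occ_inf (Wm n @ Wm n @ Wm n @ Wm n) Winf p"
  using occ_inf_imp_occ_Wm[of "Wm n @ Wm n @ Wm n @ Wm n" p "n + (p + 4 * length (Wm n))"]
    not_occ_Wm_fourth_power[of n "p + 4 * length (Wm n)" p] by auto

theorem mainTheorem2:
  fixes n k :: nat
  shows
   "(\<forall>p. occ_inf (Wm n) Winf p \<and> (\<exists>q<p. occ_inf (Wm n) Winf q) \<longrightarrow>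
        (length (Wm n) \<le> p \<and> occ_inf (Wm n) Winf (p - length (Wm n)))
      \<or> (length (Wm n) + 1 \<le> p \<and> occ_inf (Wm n @ [1]) Winf (p - length (Wm n) - 1)))
  \<and> (\<forall>p. occ_inf (Wm n) Winf p \<longrightarrow>
        occ_inf (Wm n) Winf (p + length (Wm n)) \<or> occ_inf ([1] @ Wm n) Winf (p + length (Wm n)))
  \<and> (\<forall>p. \<not> occ_inf (Wm n @ Wm n @ Wm n @ Wm n) Winf p)
  \<and> (\<forall>p. occ (Wm n) (Wm (n + k)) p \<and> (\<exists>q<p. occ (Wm n) (Wm (n + k)) q) \<longrightarrow>
        (length (Wm n) \<le> p \<and> occ (Wm n) (Wm (n + k)) (p - length (Wm n)))
      \<or> (length (Wm n) + 1 \<le> p \<and> occ (Wm n @ [1]) (Wm (n + k)) (p - length (Wm n) - 1)))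
  \<and> (\<forall>p. occ (Wm n) (Wm (n + k)) p \<and> (\<exists>q>p. occ (Wm n) (Wm (n + k)) q) \<longrightarrow>
        occ (Wm n) (Wm (n + k)) (p + length (Wm n)) \<or> occ ([1] @ Wm n) (Wm (n + k)) (p + length (Wm n)))
  \<and> (\<forall>p. \<not> occ (Wm n @ Wm n @ Wm n @ Wm n) (Wm (n + k)) p)"
  by (intro conjI allI impI; (elim conjE exE)?)
    (rule Winf_occ_Wm_preceded Winf_occ_Wm_followed Winf_not_occ_Wm_fourth_power
      occ_Wm_preceded occ_Wm_followed not_occ_Wm_fourth_power; assumption)+

end
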